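(* Let $\pi\colon(T,X)\to(T,Y)$ be a nontrivial extension of compact metric flows with $(T,Y)$ minimal. Suppose that $\mathtt R_\pi$ has a dense set of a.p. points and that $\pi$ is weakly mixing. Then there exists a residual set $Y_{\mathrm{LY}}\subseteq Y$ such that for every $y\in Y_{\mathrm{LY}}$, the fiber $\pi^{-1}y$ has no isolated points and contains an uncountable subset $B$ which is dense in $\pi^{-1}y$ and is Li-Yorke scrambled for $\pi$ relative to $\mathtt R_\pi$.
   Context: $\mathtt R_\pi=\{(x_1,x_2):\pi x_1=\pi x_2\}$ with diagonal $T$-action; $\Delta_X$ the diagonal; nontrivial means $\mathtt R_\pi\ne\Delta_X$. A point is a.p. if its return-time sets to neighborhoods are syndetic in $T$. $\pi$ is weakly mixing if $(T,\mathtt R_\pi)$ is topologically transitive (for nonempty open $U,V\subseteq\mathtt R_\pi$ some $t$ has $V\cap tU\ne\emptyset$). For closed $L$ with $\Delta_X\subsetneq L\subseteq\mathtt R_\pi$, $(x,x')$ is a Li-Yorke pair for $\pi$ rel. $L$ if $(x,x')\in\mathtt R_\pi$ and $L\subseteq\overline{T(x,x')}$; a set $S\subseteq X$ is Li-Yorke scrambled for $\pi$ rel. $L$ if every $(x,x')\in S\times S$ with $x\ne x'$ is a Li-Yorke pair for $\pi$ rel. $L$. *)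

theory Defs
  imports "HOL-Analysis.Analysis"
begin

text \<open>Flows: a (not necessarily abelian) topological group T, written additively
  (class topological_group_add), acting continuously on a compact space.
  The phase spaces are the whole types 'x, 'y (compact metric: metric_space
  with compact UNIV).\<close>

definition flow :: "('g::topological_group_add \<Rightarrow> 'x::topological_space \<Rightarrow> 'x) \<Rightarrow> bool" where
  "flow act \<longleftrightarrow> (\<forall>x. act 0 x = x) \<and> (\<forall>s t x. act (s + t) x = act s (act t x))
     \<and> continuous_on UNIV (\<lambda>(t, x). act t x)"

definition extension ::
  "('g::topological_group_add \<Rightarrow> 'x::topological_space \<Rightarrow> 'x) \<Rightarrow>
   ('g \<Rightarrow> 'y::topological_space \<Rightarrow> 'y) \<Rightarrow> ('x \<Rightarrow> 'y) \<Rightarrow> bool" where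
  "extension actX actY \<pi> \<longleftrightarrow> continuous_on UNIV \<pi> \<and> surj \<pi> \<and> (\<forall>t x. \<pi> (actX t x) = actY t (\<pi> x))"

definition minimal_flow :: "('g::topological_group_add \<Rightarrow> 'y::topological_space \<Rightarrow> 'y) \<Rightarrow> bool" where
  "minimal_flow act \<longleftrightarrow> (\<forall>M. closed M \<and> M \<noteq> {} \<and> (\<forall>t. act t ` M \<subseteq> M) \<longrightarrow> M = UNIV)"

definition Rpi :: "('x \<Rightarrow> 'y) \<Rightarrow> ('x \<times> 'x) set" where
  "Rpi \<pi> = {(x1, x2). \<pi> x1 = \<pi> x2}"

definition diag_act :: "('g \<Rightarrow> 'x \<Rightarrow> 'x) \<Rightarrow> 'g \<Rightarrow> 'x \<times> 'x \<Rightarrow> 'x \<times> 'x" where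
  "diag_act act t p = (act t (fst p), act t (snd p))"

definition syndetic :: "'g::topological_group_add set \<Rightarrow> bool" where
  "syndetic S \<longleftrightarrow> (\<exists>K. compact K \<and> (\<forall>t. \<exists>k\<in>K. \<exists>s\<in>S. t = k + s))"

definition almost_periodic_pt :: "('g::topological_group_add \<Rightarrow> 'z::topological_space \<Rightarrow> 'z) \<Rightarrow> 'z \<Rightarrow> bool" where
  "almost_periodic_pt act z \<longleftrightarrow> (\<forall>U. open U \<and> z \<in> U \<longrightarrow> syndetic {t. act t z \<in> U})"

text \<open>pi weakly mixing: (T, R_pi) topologically transitive (relatively open subsets of R_pi).\<close>
definition weakly_mixing_ext :: "('g \<Rightarrow> 'x::topological_space \<Rightarrow> 'x) \<Rightarrow> ('x \<Rightarrow> 'y) \<Rightarrow> bool" where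
  "weakly_mixing_ext act \<pi> \<longleftrightarrow>
     (\<forall>U V. openin (top_of_set (Rpi \<pi>)) U \<and> U \<noteq> {} \<and> openin (top_of_set (Rpi \<pi>)) V \<and> V \<noteq> {}
        \<longrightarrow> (\<exists>t. V \<inter> diag_act act t ` U \<noteq> {}))"

definition LY_pair :: "('g \<Rightarrow> 'x::topological_space \<Rightarrow> 'x) \<Rightarrow> ('x \<Rightarrow> 'y) \<Rightarrow> ('x \<times> 'x) set \<Rightarrow> 'x \<Rightarrow> 'x \<Rightarrow> bool" where
  "LY_pair act \<pi> L x x' \<longleftrightarrow> (x, x') \<in> Rpi \<pi> \<and> L \<subseteq> closure (range (\<lambda>t. diag_act act t (x, x')))"

definition LY_scrambled :: "('g \<Rightarrow> 'x::topological_space \<Rightarrow> 'x) \<Rightarrow> ('x \<Rightarrow> 'y) \<Rightarrow> ('x \<times> 'x) set \<Rightarrow> 'x set \<Rightarrow> bool" where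
  "LY_scrambled act \<pi> L S \<longleftrightarrow> (\<forall>x\<in>S. \<forall>x'\<in>S. x \<noteq> x' \<longrightarrow> LY_pair act \<pi> L x x')"

definition residual :: "'a::topological_space set \<Rightarrow> bool" where
  "residual S \<longleftrightarrow> (\<exists>F. countable F \<and> (\<forall>U\<in>F. open U \<and> closure U = UNIV) \<and> \<Inter>F \<subseteq> S)"

end

theory Submission
  imports Defs
begin

text \<open>The projection \<open>\<pi> \<circ> fst : R\<^sub>\<pi> \<rightarrow> Y\<close> is semi-open: the image of a nonempty relatively
  open set has nonempty interior. Indeed such a set contains an almost periodic point \<open>z\<close>, the
  orbit of \<open>z\<close> lies in finitely many translates of a small compact neighbourhood \<open>C\<close> of \<open>z\<close>,
  so by minimality \<open>Y\<close> is a finite union of closed translates of the image of \<open>C\<close>, one of which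
  has interior. With weak mixing this shows that for basic open \<open>A, B \<subseteq> X\<close> and a basic open
  rectangle \<open>S\<close> meeting \<open>R\<^sub>\<pi>\<close>, the points \<open>y\<close> over which either the fibre square misses
  \<open>A \<times> B\<close> or some of its pairs in \<open>A \<times> B\<close> has orbit entering \<open>S\<close> contain a dense open set.
  Over the residual intersection of these sets, for each \<open>S\<close> the pairs of the fibre whose orbit
  enters \<open>S\<close> form a dense open relation, and Mycielski's theorem gives an uncountable dense
  subset of the fibre all of whose pairs have orbits entering every \<open>S\<close>, i.e. dense in
  \<open>R\<^sub>\<pi>\<close>. A rectangle \<open>S\<close> disjoint from the diagonal makes the fibre perfect.\<close>

section \<open>Topological preliminaries\<close>

lemma finite_refinement:
  fixes U0 :: "'a::preorder"
  assumes "finite Ts" and "Inv U0"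
    and achieve: "\<And>P U. P \<in> Ts \<Longrightarrow> Inv U \<Longrightarrow> \<exists>U'. Inv U' \<and> U' \<le> U \<and> P U'"
    and preserve: "\<And>P U U'. P \<in> Ts \<Longrightarrow> P U \<Longrightarrow> U' \<le> U \<Longrightarrow> P U'"
  shows "\<exists>U. Inv U \<and> U \<le> U0 \<and> (\<forall>P\<in>Ts. P U)"
  using assms(1) achieve preserve
proof (induction Ts)
  case empty
  then show ?case using \<open>Inv U0\<close> by blast
next
  case (insert P Ts)
  then obtain U where U: "Inv U" "U \<le> U0" "\<forall>Q\<in>Ts. Q U" by blast
  then obtain U' where U': "Inv U'" "U' \<le> U" "P U'" using insert.prems(1) by blast
  have "Q U'" if "Q \<in> insert P Ts" for Q
    using that U(3) U'(2,3) by (cases "Q = P") (auto intro: insert.prems(2)[OF that])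
  then show ?case using U'(1,2) U(2) by (meson order_trans)
qed

lemma compact_countable_local_base:
  fixes F :: "'a::metric_space set"
  assumes "compact F"
  obtains \<R> :: "'a set set" where "countable \<R>" and "\<forall>B\<in>\<R>. open B \<and> B \<inter> F \<noteq> {}"
    and "\<forall>x\<in>F. \<forall>U. open U \<and> x \<in> U \<longrightarrow> (\<exists>B\<in>\<R>. x \<in> B \<and> B \<subseteq> U)"
proof -
  define e :: "nat \<Rightarrow> real" where "e n = 1 / Suc n" for n
  have "e n > 0" for n unfolding e_def by simp
  then have "\<exists>k. finite k \<and> k \<subseteq> F \<and> F \<subseteq> (\<Union>c\<in>k. ball c (e n))" for n
    using seq_compact_imp_totally_bounded[OF compact_imp_seq_compact[OF \<open>compact F\<close>]] by blast
  then obtain net where net: "\<And>n. finite (net n) \<and> net n \<subseteq> F \<and> F \<subseteq> (\<Union>c\<in>net n. ball c (e n))"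
    by metis
  define \<R> where "\<R> = (\<Union>n. (\<lambda>c. ball c (e n)) ` net n)"
  have "countable \<R>"
    unfolding \<R>_def
    by (rule countable_UN[OF countableI_type]) (use net in \<open>simp add: countable_finite\<close>)
  moreover have "\<forall>B\<in>\<R>. open B \<and> B \<inter> F \<noteq> {}"
  proof
    fix B assume B: "B \<in> \<R>"
    obtain n c where "c \<in> net n" "B = ball c (e n)" using B unfolding \<R>_def by blast
    then have "c \<in> B \<inter> F" using net[THEN conjunct2, THEN conjunct1] unfolding e_def by auto
    then show "open B \<and> B \<inter> F \<noteq> {}" using \<open>B = ball c (e n)\<close> open_ball by blast
  qed
  moreover have "\<forall>x\<in>F. \<forall>U. open U \<and> x \<in> U \<longrightarrow> (\<exists>B\<in>\<R>. x \<in> B \<and> B \<subseteq> U)"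
  proof (intro ballI allI impI)
    fix x U assume "x \<in> F" "open U \<and> x \<in> U"
    then have "open U" "x \<in> U" by blast+
    obtain r where "r > 0" "ball x r \<subseteq> U" using \<open>open U\<close> \<open>x \<in> U\<close> open_contains_ball by blast
    obtain n :: nat where "2 / r < n" using reals_Archimedean2 by blast
    then have n: "2 * e n < r"
      using \<open>r > 0\<close> unfolding e_def by (simp add: field_simps)
    obtain c where c: "c \<in> net n" "dist c x < e n"
      using net[of n, THEN conjunct2, THEN conjunct2] \<open>x \<in> F\<close> by auto
    have "ball c (e n) \<subseteq> ball x r"
    proof
      fix z assume "z \<in> ball c (e n)"
      then have "dist c z < e n" by simp
      then show "z \<in> ball x r" using c(2) n dist_triangle2[of x z c] by (simp add: dist_commute)
    qed
    moreover have "ball c (e n) \<in> \<R>" using c(1) unfolding \<R>_def by blast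
    ultimately show "\<exists>B\<in>\<R>. x \<in> B \<and> B \<subseteq> U"
      using c(2) \<open>ball x r \<subseteq> U\<close> by (intro bexI[of _ "ball c (e n)"]) auto
  qed
  ultimately show thesis by (rule that)
qed

lemma compact_local_base_sequence:
  fixes F :: "'a::metric_space set"
  assumes "compact F" and "F \<noteq> {}"
  obtains R :: "nat \<Rightarrow> 'a set"
  where "\<And>n. open (R n)" and "\<And>n. R n \<inter> F \<noteq> {}"
    and "\<And>x U. x \<in> F \<Longrightarrow> open U \<Longrightarrow> x \<in> U \<Longrightarrow> \<exists>n. x \<in> R n \<and> R n \<subseteq> U"
proof -
  obtain \<R> :: "'a set set" where "countable \<R>" and \<R>: "\<forall>B\<in>\<R>. open B \<and> B \<inter> F \<noteq> {}"
    and base: "\<forall>x\<in>F. \<forall>U. open U \<and> x \<in> U \<longrightarrow> (\<exists>B\<in>\<R>. x \<in> B \<and> B \<subseteq> U)"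
    by (rule compact_countable_local_base[OF \<open>compact F\<close>])
  have "\<R> \<noteq> {}" using base open_UNIV \<open>F \<noteq> {}\<close> by blast
  then have R_in: "from_nat_into \<R> n \<in> \<R>" for n by (rule from_nat_into)
  show thesis
  proof
    show "open (from_nat_into \<R> n)" "from_nat_into \<R> n \<inter> F \<noteq> {}" for n
      using \<R> R_in[of n] by blast+
    show "\<exists>n. x \<in> from_nat_into \<R> n \<and> from_nat_into \<R> n \<subseteq> U"
      if "x \<in> F" "open U" "x \<in> U" for x U
    proof -
      obtain B where B: "B \<in> \<R>" "x \<in> B" "B \<subseteq> U" using base \<open>x \<in> F\<close> \<open>open U\<close> \<open>x \<in> U\<close> by blast
      moreover have "B \<in> range (from_nat_into \<R>)"
        using B(1) range_from_nat_into[OF \<open>\<R> \<noteq> {}\<close> \<open>countable \<R>\<close>] by simp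
      ultimately show ?thesis by blast
    qed
  qed
qed

lemma decseq_compact_Inter_nonempty:
  fixes S :: "nat \<Rightarrow> 'a::topological_space set"
  assumes "compact K" and "\<And>n. closed (S n)" and "\<And>n. S n \<noteq> {}" and "\<And>n. S n \<subseteq> K"
    and "\<And>n. S (Suc n) \<subseteq> S n"
  shows "\<exists>x. \<forall>n. x \<in> S n"
proof -
  have "K \<inter> \<Inter>(range S) \<noteq> {}"
  proof (rule compact_imp_fip_image[OF \<open>compact K\<close>])
    show "closed (S n)" for n by fact
    fix N :: "nat set" assume "finite N"
    have "S (Max N) \<subseteq> S n" if "n \<in> N" for n
      using lift_Suc_antimono_le[of S, OF assms(5) Max_ge[OF \<open>finite N\<close> that]] .
    then show "K \<inter> \<Inter>(S ` N) \<noteq> {}"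
      using assms(3,4) by (cases "N = {}") blast+
  qed
  then show ?thesis by blast
qed

lemma uncountable_UNIV_nat_bool_fun: "uncountable (UNIV :: (nat \<Rightarrow> bool) set)"
proof
  assume "countable (UNIV :: (nat \<Rightarrow> bool) set)"
  then obtain f :: "nat \<Rightarrow> nat \<Rightarrow> bool" where "range f = UNIV"
    by (metis UNIV_not_empty uncountable_def)
  then obtain n where "f n = (\<lambda>k. \<not> f k k)" by (metis UNIV_I imageE)
  then show False by (metis (full_types))
qed

lemma interior_Union_closed_eq_empty:
  assumes "finite \<C>" and "\<And>C. C \<in> \<C> \<Longrightarrow> closed C \<and> interior C = {}"
  shows "interior (\<Union>\<C>) = {}"
  using assms
proof (induction \<C>)
  case empty
  then show ?case by simp
next
  case (insert C \<C>)
  then show ?case using interior_closed_Un_empty_interior[of C "\<Union>\<C>"] by simp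
qed

lemma product_neighbourhood_base:
  assumes base: "\<And>x U. open U \<Longrightarrow> x \<in> U \<Longrightarrow> \<exists>n. x \<in> R n \<and> R n \<subseteq> U"
    and "open U" and "q \<in> U"
  obtains i j where "q \<in> R i \<times> R j" and "R i \<times> R j \<subseteq> U"
proof -
  obtain A B where AB: "open A" "open B" "q \<in> A \<times> B" "A \<times> B \<subseteq> U"
    by (rule open_prod_elim[OF \<open>open U\<close> \<open>q \<in> U\<close>])
  obtain i where "fst q \<in> R i" "R i \<subseteq> A" using base[OF AB(1)] AB(3) by (auto simp: mem_Times_iff)
  moreover obtain j where "snd q \<in> R j" "R j \<subseteq> B" using base[OF AB(2)] AB(3) by (auto simp: mem_Times_iff)
  ultimately have "q \<in> R i \<times> R j" "R i \<times> R j \<subseteq> A \<times> B" by (auto simp: mem_Times_iff)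
  then show thesis using that AB(4) by blast
qed

lemma islimpt_if_dense_offdiagonal:
  assumes "F \<times> F \<subseteq> closure (W \<inter> F \<times> F)" and "W \<inter> Id = {}" and "x \<in> F"
  shows "x islimpt F"
proof (rule islimptI)
  fix T assume "x \<in> T" "open T"
  then have "(T \<times> T) \<inter> closure (W \<inter> F \<times> F) \<noteq> {}" using assms(1,3) by blast
  then obtain a b where "(a, b) \<in> W" "a \<in> F \<inter> T" "b \<in> F \<inter> T"
    using open_Int_closure_eq_empty[OF open_Times[OF \<open>open T\<close> \<open>open T\<close>]] by blast
  moreover have "a \<noteq> b" using \<open>(a, b) \<in> W\<close> \<open>W \<inter> Id = {}\<close> by auto
  ultimately show "\<exists>y\<in>F. y \<in> T \<and> y \<noteq> x" by blast
qed

lemma dense_interior_image_Un_compl_closure: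
  fixes f :: "'a::topological_space \<Rightarrow> 'b::topological_space"
  assumes "continuous_on UNIV f" and "open G"
    and interior_image: "\<And>E. open E \<Longrightarrow> Z \<inter> E \<noteq> {} \<Longrightarrow> interior (f ` (Z \<inter> E \<inter> W)) \<noteq> {}"
  shows "closure (interior (f ` (Z \<inter> G \<inter> W)) \<union> - closure (f ` (Z \<inter> G))) = UNIV"
    (is "closure ?D = UNIV")
proof (rule ccontr)
  let ?T = "- closure ?D"
  assume "closure ?D \<noteq> UNIV"
  then have "open ?T" "?T \<noteq> {}" by auto
  have "?T \<subseteq> closure (f ` (Z \<inter> G))"
  proof
    fix x assume "x \<in> ?T"
    then have "x \<notin> ?D" using closure_subset[of ?D] by (meson ComplD subsetD)
    then show "x \<in> closure (f ` (Z \<inter> G))" by simp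
  qed
  then have "?T \<inter> closure (f ` (Z \<inter> G)) \<noteq> {}" using \<open>?T \<noteq> {}\<close> by blast
  then have "?T \<inter> f ` (Z \<inter> G) \<noteq> {}" using open_Int_closure_eq_empty[OF \<open>open ?T\<close>] by blast
  then obtain p where p: "p \<in> Z \<inter> G" "f p \<in> ?T" by blast
  define E where "E = G \<inter> f -` ?T"
  have "open E" unfolding E_def by (intro open_Int \<open>open G\<close> open_vimage \<open>open ?T\<close> assms(1))
  moreover have "Z \<inter> E \<noteq> {}" using p unfolding E_def by blast
  ultimately have nonempty: "interior (f ` (Z \<inter> E \<inter> W)) \<noteq> {}" by (rule interior_image)
  have "f ` (Z \<inter> E \<inter> W) \<subseteq> ?T \<inter> f ` (Z \<inter> G \<inter> W)" unfolding E_def by blast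
  then have "interior (f ` (Z \<inter> E \<inter> W)) \<subseteq> interior (?T \<inter> f ` (Z \<inter> G \<inter> W))"
    by (rule interior_mono)
  also have "\<dots> = ?T \<inter> interior (f ` (Z \<inter> G \<inter> W))"
    by (simp only: interior_Int interior_open[OF \<open>open ?T\<close>])
  also have "\<dots> \<subseteq> ?T \<inter> closure ?D" using closure_subset by blast
  finally show False using nonempty by blast
qed

section \<open>Mycielski's theorem\<close>

definition opens_meeting :: "'a::topological_space set \<Rightarrow> 'i set \<Rightarrow> ('i \<Rightarrow> 'a set) \<Rightarrow> bool" where
  "opens_meeting F I V \<longleftrightarrow> (\<forall>i\<in>I. open (V i) \<and> V i \<inter> F \<noteq> {})"

lemma opens_meeting_shrink_closures:
  fixes F :: "'a::metric_space set"
  assumes "opens_meeting F I V"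
  obtains V' where "opens_meeting F I V'" "\<forall>i\<in>I. closure (V' i) \<subseteq> V i"
proof -
  have "\<forall>i\<in>I. \<exists>a. a \<in> V i \<inter> F" using assms unfolding opens_meeting_def by blast
  from bchoice[OF this] obtain a where a: "\<And>i. i \<in> I \<Longrightarrow> a i \<in> V i \<inter> F" by blast
  have "\<forall>i\<in>I. \<exists>r>0. cball (a i) r \<subseteq> V i"
    using assms a unfolding opens_meeting_def open_contains_cball by blast
  from bchoice[OF this] obtain r where r: "\<And>i. i \<in> I \<Longrightarrow> r i > 0 \<and> cball (a i) (r i) \<subseteq> V i"
    by blast
  show thesis
  proof
    show "opens_meeting F I (\<lambda>i. ball (a i) (r i))"
      unfolding opens_meeting_def
    proof
      fix i assume "i \<in> I"
      then have "a i \<in> ball (a i) (r i) \<inter> F" using a r by simp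
      then show "open (ball (a i) (r i)) \<and> ball (a i) (r i) \<inter> F \<noteq> {}" by blast
    qed
    show "\<forall>i\<in>I. closure (ball (a i) (r i)) \<subseteq> V i"
      using closure_minimal[OF ball_subset_cball closed_cball] r by blast
  qed
qed

lemma opens_meeting_refine_pair:
  fixes F :: "'a::topological_space set"
  assumes V: "opens_meeting F I V" and "i \<in> I" "k \<in> I" "i \<noteq> k"
    and "open W" and dense: "F \<times> F \<subseteq> closure (W \<inter> F \<times> F)"
  obtains V' where "opens_meeting F I V'" "V' \<le> V" "V' i \<times> V' k \<subseteq> W"
proof -
  have Vi: "open (V i)" "V i \<inter> F \<noteq> {}" and Vk: "open (V k)" "V k \<inter> F \<noteq> {}"
    using V \<open>i \<in> I\<close> \<open>k \<in> I\<close> unfolding opens_meeting_def by blast+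
  then obtain a0 b0 where "a0 \<in> V i \<inter> F" "b0 \<in> V k \<inter> F" by blast
  then have "(a0, b0) \<in> (V i \<times> V k) \<inter> closure (W \<inter> F \<times> F)"
    using dense by blast
  then have "(V i \<times> V k) \<inter> (W \<inter> F \<times> F) \<noteq> {}"
    using open_Int_closure_eq_empty[OF open_Times[OF Vi(1) Vk(1)]] by blast
  then obtain a b where ab: "(a, b) \<in> W \<inter> (V i \<times> V k)" "a \<in> F" "b \<in> F" by blast
  obtain A B where AB: "open A" "open B" "(a, b) \<in> A \<times> B" "A \<times> B \<subseteq> W \<inter> (V i \<times> V k)"
    by (rule open_prod_elim[OF open_Int[OF \<open>open W\<close> open_Times[OF Vi(1) Vk(1)]] ab(1)])
  then have "A \<subseteq> V i" "B \<subseteq> V k" by blast+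
  show thesis
  proof
    show "opens_meeting F I (V(i := A, k := B))"
    proof -
      have "A \<inter> F \<noteq> {}" "B \<inter> F \<noteq> {}" using AB(3) ab(2,3) by auto
      then show ?thesis using V AB(1,2) unfolding opens_meeting_def by (simp add: fun_upd_apply)
    qed
    show "V(i := A, k := B) \<le> V"
      using \<open>A \<subseteq> V i\<close> \<open>B \<subseteq> V k\<close> by (simp add: le_fun_def)
    show "(V(i := A, k := B)) i \<times> (V(i := A, k := B)) k \<subseteq> W"
      using AB \<open>i \<noteq> k\<close> by auto
  qed
qed

lemma opens_meeting_refine_pairs:
  fixes F :: "'a::topological_space set" and V :: "'i \<Rightarrow> 'a set"
  assumes V: "opens_meeting F I V" and "finite I" and "finite \<W>"
    and "\<And>W. W \<in> \<W> \<Longrightarrow> open W" and "\<And>W. W \<in> \<W> \<Longrightarrow> F \<times> F \<subseteq> closure (W \<inter> F \<times> F)"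
  obtains V' where "opens_meeting F I V'" "V' \<le> V"
    "\<forall>i\<in>I. \<forall>k\<in>I. i \<noteq> k \<longrightarrow> (\<forall>W\<in>\<W>. V' i \<times> V' k \<subseteq> W)"
proof -
  define task where "task = (\<lambda>(i, k, W) (U :: 'i \<Rightarrow> 'a set). U i \<times> U k \<subseteq> W)"
  define J where "J = {(i, k, W). i \<in> I \<and> k \<in> I \<and> i \<noteq> k \<and> W \<in> \<W>}"
  have "J \<subseteq> I \<times> I \<times> \<W>" unfolding J_def by auto
  moreover have "finite (I \<times> I \<times> \<W>)" using \<open>finite I\<close> \<open>finite \<W>\<close> by simp
  ultimately have "finite J" by (rule finite_subset)
  have "\<exists>U. opens_meeting F I U \<and> U \<le> V \<and> (\<forall>P\<in>task ` J. P U)"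
  proof (rule finite_refinement[where Inv = "opens_meeting F I"])
    show "finite (task ` J)" using \<open>finite J\<close> by blast
    show "opens_meeting F I V" by (rule V)
    show "\<exists>U'. opens_meeting F I U' \<and> U' \<le> U \<and> P U'"
      if P: "P \<in> task ` J" and U: "opens_meeting F I U" for P U
    proof -
      obtain i k W where "(i, k, W) \<in> J" and P_eq: "P = task (i, k, W)" using P by auto
      then have "i \<in> I" "k \<in> I" "i \<noteq> k" "W \<in> \<W>" unfolding J_def by auto
      moreover note assms(4,5)[OF \<open>W \<in> \<W>\<close>]
      ultimately obtain U' where "opens_meeting F I U'" "U' \<le> U" "U' i \<times> U' k \<subseteq> W"
        using opens_meeting_refine_pair[OF U] by blast
      then show ?thesis unfolding P_eq task_def by auto
    qed
    show "P U'" if "P \<in> task ` J" "P U" "U' \<le> U" for P U U'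
      using that unfolding task_def le_fun_def by auto
  qed
  then obtain U where U: "opens_meeting F I U" "U \<le> V" "\<forall>P\<in>task ` J. P U" by blast
  show thesis
  proof (rule that[OF U(1,2)], intro ballI impI)
    fix i k W assume "i \<in> I" "k \<in> I" "i \<noteq> k" "W \<in> \<W>"
    then have "task (i, k, W) \<in> task ` J" unfolding J_def by blast
    then have "task (i, k, W) U" using U(3) by blast
    then show "U i \<times> U k \<subseteq> W" unfolding task_def by simp
  qed
qed

lemma butlast_map_upt: "butlast (map \<sigma> [0..<Suc n]) = map \<sigma> [0..<n]"
  by simp

locale cantor_scheme =
  fixes F :: "'a::metric_space set" and W :: "nat \<Rightarrow> ('a \<times> 'a) set" and R :: "nat \<Rightarrow> 'a set"
  assumes compact_F: "compact F"
    and open_W: "\<And>m. open (W m)" and dense_W: "\<And>m. F \<times> F \<subseteq> closure (W m \<inter> F \<times> F)"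
    and open_R: "\<And>n. open (R n)" and R_meets_F: "\<And>n. R n \<inter> F \<noteq> {}"
begin

text \<open>At stage \<open>n\<close> the open cells are indexed by pairs \<open>(j, s)\<close> with \<open>j < n\<close> and a binary
  address \<open>s\<close> of length \<open>n\<close>: the tree number \<open>j\<close> was started at stage \<open>j\<close> inside \<open>R j\<close>, and
  the cell \<open>(j, s)\<close> of stage \<open>n + 1\<close> lies inside \<open>(j, butlast s)\<close> of stage \<open>n\<close>. Distinct cells
  of stage \<open>n + 1\<close> are related by \<open>W 0, \<dots>, W n\<close>, so the branch points \<open>point j \<sigma>\<close> of
  all the trees together form the required set.\<close>

definition cell_index :: "nat \<Rightarrow> (nat \<times> bool list) set" where
  "cell_index n = {(j, s). j < n \<and> length s = n}"

lemma finite_cell_index: "finite (cell_index n)"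
proof -
  have "finite {s :: bool list. length s = n}" using finite_lists_length_eq[of "UNIV :: bool set" n] by simp
  moreover have "cell_index n \<subseteq> {..<n} \<times> {s. length s = n}" unfolding cell_index_def by auto
  ultimately show ?thesis using finite_subset by blast
qed

definition parent_cell :: "nat \<Rightarrow> (nat \<times> bool list \<Rightarrow> 'a set) \<Rightarrow> nat \<times> bool list \<Rightarrow> 'a set" where
  "parent_cell n U = (\<lambda>(j, s). if j < n then U (j, butlast s) else R n)"

definition refines :: "nat \<Rightarrow> (nat \<times> bool list \<Rightarrow> 'a set) \<Rightarrow> (nat \<times> bool list \<Rightarrow> 'a set) \<Rightarrow> bool" where
  "refines n U U' \<longleftrightarrow> opens_meeting F (cell_index (Suc n)) U'
     \<and> (\<forall>i\<in>cell_index (Suc n). closure (U' i) \<subseteq> parent_cell n U i)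
     \<and> (\<forall>i\<in>cell_index (Suc n). \<forall>k\<in>cell_index (Suc n). i \<noteq> k \<longrightarrow> (\<forall>m\<le>n. U' i \<times> U' k \<subseteq> W m))"

lemma opens_meeting_parent_cell:
  assumes "opens_meeting F (cell_index n) U"
  shows "opens_meeting F (cell_index (Suc n)) (parent_cell n U)"
  unfolding opens_meeting_def
proof
  fix i assume "i \<in> cell_index (Suc n)"
  then obtain j s where i: "i = (j, s)" "j < Suc n" "length s = Suc n"
    unfolding cell_index_def by blast
  show "open (parent_cell n U i) \<and> parent_cell n U i \<inter> F \<noteq> {}"
  proof (cases "j < n")
    case True
    then have "(j, butlast s) \<in> cell_index n" using i unfolding cell_index_def by auto
    then show ?thesis using assms True i unfolding opens_meeting_def parent_cell_def by auto
  next
    case False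
    then show ?thesis using open_R R_meets_F i unfolding parent_cell_def by auto
  qed
qed

lemma refines_exists:
  assumes "opens_meeting F (cell_index n) U"
  shows "\<exists>U'. refines n U U'"
proof -
  let ?I = "cell_index (Suc n)"
  have open_w: "open w" if "w \<in> W ` {..n}" for w using that open_W by blast
  have dense_w: "F \<times> F \<subseteq> closure (w \<inter> F \<times> F)" if "w \<in> W ` {..n}" for w
  proof -
    from that obtain m where "w = W m" by blast
    with dense_W show ?thesis by (simp only:)
  qed
  obtain V where V: "opens_meeting F ?I V" "V \<le> parent_cell n U"
    "\<forall>i\<in>?I. \<forall>k\<in>?I. i \<noteq> k \<longrightarrow> (\<forall>w\<in>W ` {..n}. V i \<times> V k \<subseteq> w)"
    by (rule opens_meeting_refine_pairs[OF opens_meeting_parent_cell[OF assms] finite_cell_index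
          finite_imageI[OF finite_atMost] open_w dense_w])
  obtain U' where U': "opens_meeting F ?I U'" "\<forall>i\<in>?I. closure (U' i) \<subseteq> V i"
    by (rule opens_meeting_shrink_closures[OF V(1)])
  have "refines n U U'"
    unfolding refines_def
  proof (intro conjI ballI impI allI)
    show "opens_meeting F ?I U'" by (rule U'(1))
  next
    fix i assume "i \<in> ?I"
    then show "closure (U' i) \<subseteq> parent_cell n U i" using U'(2) V(2) unfolding le_fun_def by blast
  next
    fix i k m assume "i \<in> ?I" "k \<in> ?I" "i \<noteq> k" "m \<le> n"
    then have "V i \<times> V k \<subseteq> W m" using V(3) by auto
    moreover have "U' i \<subseteq> V i" "U' k \<subseteq> V k"
      using U'(2) closure_subset \<open>i \<in> ?I\<close> \<open>k \<in> ?I\<close> by blast+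
    ultimately show "U' i \<times> U' k \<subseteq> W m" by blast
  qed
  then show ?thesis by blast
qed

primrec cells :: "nat \<Rightarrow> nat \<times> bool list \<Rightarrow> 'a set" where
  "cells 0 = (\<lambda>_. UNIV)"
| "cells (Suc n) = (SOME U'. refines n (cells n) U')"

declare cells.simps(2) [simp del]

lemma cells_refine: "opens_meeting F (cell_index n) (cells n) \<and> refines n (cells n) (cells (Suc n))"
proof (induction n)
  case 0
  have "opens_meeting F (cell_index 0) (cells 0)" by (simp add: opens_meeting_def cell_index_def)
  then show ?case using someI_ex[OF refines_exists] by (simp add: cells.simps(2))
next
  case (Suc n)
  then have "opens_meeting F (cell_index (Suc n)) (cells (Suc n))" unfolding refines_def by blast
  then show ?case using someI_ex[OF refines_exists] by (simp add: cells.simps(2))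
qed

lemma closure_cells_Suc:
  assumes "j < Suc n" and "length s = Suc n"
  shows "closure (cells (Suc n) (j, s)) \<subseteq> (if j < n then cells n (j, butlast s) else R n)"
  using cells_refine[of n] assms unfolding refines_def cell_index_def parent_cell_def by auto

lemma cells_product_subset:
  assumes "i \<in> cell_index (Suc n)" "k \<in> cell_index (Suc n)" "i \<noteq> k" "m \<le> n"
  shows "cells (Suc n) i \<times> cells (Suc n) k \<subseteq> W m"
  using cells_refine[of n] assms unfolding refines_def by blast

definition point :: "nat \<Rightarrow> (nat \<Rightarrow> bool) \<Rightarrow> 'a" where
  "point j \<sigma> = (SOME x. \<forall>k. x \<in> closure (cells (Suc j + k) (j, map \<sigma> [0..<Suc j + k])) \<inter> F)"

lemma point: "point j \<sigma> \<in> closure (cells (Suc j + k) (j, map \<sigma> [0..<Suc j + k])) \<inter> F"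
proof -
  let ?S = "\<lambda>k. closure (cells (Suc j + k) (j, map \<sigma> [0..<Suc j + k])) \<inter> F"
  have "\<exists>x. \<forall>k. x \<in> ?S k"
  proof (rule decseq_compact_Inter_nonempty[OF compact_F])
    show "closed (?S k)" for k using compact_imp_closed[OF compact_F] by blast
    show "?S k \<noteq> {}" for k
    proof -
      have "(j, map \<sigma> [0..<Suc j + k]) \<in> cell_index (Suc j + k)" unfolding cell_index_def by simp
      then show ?thesis
        using cells_refine[of "Suc j + k"] closure_subset unfolding opens_meeting_def by blast
    qed
    show "?S k \<subseteq> F" for k by blast
    show "?S (Suc k) \<subseteq> ?S k" for k
    proof -
      have "closure (cells (Suc (Suc j + k)) (j, map \<sigma> [0..<Suc (Suc j + k)]))
          \<subseteq> cells (Suc j + k) (j, map \<sigma> [0..<Suc j + k])"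
        using closure_cells_Suc[of j "Suc j + k" "map \<sigma> [0..<Suc (Suc j + k)]"]
        by (simp del: upt_Suc add: butlast_map_upt)
      then show ?thesis using closure_subset by fastforce
    qed
  qed
  then show ?thesis unfolding point_def by (rule someI_ex[where P = "\<lambda>x. \<forall>k. x \<in> ?S k", THEN spec])
qed

lemma point_in_F: "point j \<sigma> \<in> F"
  using point[of j \<sigma> 0] by blast

lemma point_in_R: "point j \<sigma> \<in> R j"
  using point[of j \<sigma> 0] closure_cells_Suc[of j j "map \<sigma> [0..<Suc j]"] by auto

lemma point_in_cells:
  assumes "j < n"
  shows "point j \<sigma> \<in> cells n (j, map \<sigma> [0..<n])"
proof -
  have "Suc j + (n - j) = Suc n" using assms by simp
  then have "point j \<sigma> \<in> closure (cells (Suc n) (j, map \<sigma> [0..<Suc n]))"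
    using point[of j \<sigma> "n - j"] by simp
  moreover have "closure (cells (Suc n) (j, map \<sigma> [0..<Suc n])) \<subseteq> cells n (j, map \<sigma> [0..<n])"
    using closure_cells_Suc[of j n "map \<sigma> [0..<Suc n]"] assms by (simp del: upt_Suc add: butlast_map_upt)
  ultimately show ?thesis by blast
qed

lemma points_in_W:
  assumes "(j, \<sigma>) \<noteq> (j', \<sigma>')"
  shows "(point j \<sigma>, point j' \<sigma>') \<in> W m"
proof -
  obtain d where d: "j \<noteq> j' \<or> \<sigma> d \<noteq> \<sigma>' d" using assms by auto
  define n where "n = m + j + j' + d"
  have "d < Suc n" unfolding n_def by simp
  have "(j, map \<sigma> [0..<Suc n]) \<noteq> (j', map \<sigma>' [0..<Suc n])"
  proof
    assume "(j, map \<sigma> [0..<Suc n]) = (j', map \<sigma>' [0..<Suc n])"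
    then have "j = j'" and "map \<sigma> [0..<Suc n] ! d = map \<sigma>' [0..<Suc n] ! d"
      by (simp_all del: upt_Suc map_eq_conv)
    with d \<open>d < Suc n\<close> show False by (simp del: upt_Suc)
  qed
  moreover have "(j, map \<sigma> [0..<Suc n]) \<in> cell_index (Suc n)" "(j', map \<sigma>' [0..<Suc n]) \<in> cell_index (Suc n)"
    unfolding cell_index_def n_def by auto
  ultimately have "cells (Suc n) (j, map \<sigma> [0..<Suc n]) \<times> cells (Suc n) (j', map \<sigma>' [0..<Suc n]) \<subseteq> W m"
    using cells_product_subset n_def by simp
  moreover have "point j \<sigma> \<in> cells (Suc n) (j, map \<sigma> [0..<Suc n])"
    "point j' \<sigma>' \<in> cells (Suc n) (j', map \<sigma>' [0..<Suc n])"
    using point_in_cells[of j "Suc n" \<sigma>] point_in_cells[of j' "Suc n" \<sigma>'] unfolding n_def by simp_all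
  ultimately show ?thesis by blast
qed

end

theorem Mycielski:
  fixes F :: "'a::metric_space set"
  assumes "compact F" and "F \<noteq> {}" and "countable \<W>"
    and open_\<W>: "\<And>W. W \<in> \<W> \<Longrightarrow> open W"
    and dense_\<W>: "\<And>W. W \<in> \<W> \<Longrightarrow> F \<times> F \<subseteq> closure (W \<inter> F \<times> F)"
    and "W0 \<in> \<W>" and "W0 \<inter> Id = {}"
  obtains B where "B \<subseteq> F" "uncountable B" "F \<subseteq> closure B"
    "\<forall>x\<in>B. \<forall>x'\<in>B. x \<noteq> x' \<longrightarrow> (x, x') \<in> \<Inter>\<W>"
proof -
  obtain R :: "nat \<Rightarrow> 'a set" where R: "\<And>n. open (R n)" "\<And>n. R n \<inter> F \<noteq> {}"
    "\<And>x U. x \<in> F \<Longrightarrow> open U \<Longrightarrow> x \<in> U \<Longrightarrow> \<exists>n. x \<in> R n \<and> R n \<subseteq> U"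
    by (rule compact_local_base_sequence[OF \<open>compact F\<close> \<open>F \<noteq> {}\<close>]) (rule that)
  have "\<W> \<noteq> {}" using \<open>W0 \<in> \<W>\<close> by blast
  define W where "W = from_nat_into \<W>"
  have range_W: "range W = \<W>" unfolding W_def by (rule range_from_nat_into[OF \<open>\<W> \<noteq> {}\<close> \<open>countable \<W>\<close>])
  have W_in: "W m \<in> \<W>" for m using range_W by blast
  interpret cantor_scheme F W R
    by unfold_locales (simp_all add: \<open>compact F\<close> R(1,2) open_\<W>[OF W_in] dense_\<W>[OF W_in])
  define B where "B = range (\<lambda>(j, \<sigma>). point j \<sigma>)"
  have scrambled: "(x, x') \<in> \<Inter>\<W>" if xx': "x \<in> B" "x' \<in> B" "x \<noteq> x'" for x x'
  proof -
    obtain j \<sigma> j' \<sigma>' where "x = point j \<sigma>" "x' = point j' \<sigma>'" using xx' unfolding B_def by auto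
    then have "(j, \<sigma>) \<noteq> (j', \<sigma>')" using \<open>x \<noteq> x'\<close> by blast
    then have "(x, x') \<in> W m" for m using points_in_W \<open>x = point j \<sigma>\<close> \<open>x' = point j' \<sigma>'\<close> by simp
    then show ?thesis using range_W by blast
  qed
  \<comment> \<open>\<open>W0\<close> misses the diagonal, so distinct indices give distinct points\<close>
  obtain m0 where "W m0 = W0" using \<open>W0 \<in> \<W>\<close> range_W by blast
  have "inj (point 0)"
  proof
    fix \<sigma> \<sigma>' assume "point 0 \<sigma> = point 0 \<sigma>'"
    moreover have "(point 0 \<sigma>, point 0 \<sigma>') \<notin> W m0" if "point 0 \<sigma> = point 0 \<sigma>'"
      using that \<open>W m0 = W0\<close> \<open>W0 \<inter> Id = {}\<close> by auto
    ultimately show "\<sigma> = \<sigma>'" using points_in_W[of 0 \<sigma> 0 \<sigma>' m0] by blast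
  qed
  have point_in_B: "point j \<sigma> \<in> B" for j \<sigma>
    unfolding B_def by (rule image_eqI[of _ _ "(j, \<sigma>)"]) simp_all
  have "uncountable (range (point 0))"
    using countable_image_inj_on[OF _ \<open>inj (point 0)\<close>] uncountable_UNIV_nat_bool_fun by blast
  moreover have "range (point 0) \<subseteq> B" using point_in_B by blast
  ultimately have "uncountable B" using countable_subset by blast
  have "F \<subseteq> closure B"
  proof
    fix x assume "x \<in> F"
    show "x \<in> closure B"
      unfolding closure_iff_nhds_not_empty
    proof (intro allI impI)
      fix A U assume "U \<subseteq> A" "open U" "x \<in> U"
      then obtain n where "R n \<subseteq> U" using R(3) \<open>x \<in> F\<close> by blast
      then have "point n (\<lambda>_. True) \<in> A" using point_in_R \<open>U \<subseteq> A\<close> by blast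
      then show "B \<inter> A \<noteq> {}" using point_in_B by blast
    qed
  qed
  moreover have "B \<subseteq> F" unfolding B_def using point_in_F by auto
  moreover have "\<forall>x\<in>B. \<forall>x'\<in>B. x \<noteq> x' \<longrightarrow> (x, x') \<in> \<Inter>\<W>" using scrambled by blast
  ultimately show thesis using that \<open>uncountable B\<close> by simp
qed

section \<open>Flows\<close>

lemma flow_continuous_on_act:
  assumes "flow act"
  shows "continuous_on UNIV (act t)"
proof -
  have "continuous_on UNIV (\<lambda>(t, x). act t x)" using assms unfolding flow_def by blast
  then have "continuous_on UNIV ((\<lambda>(t, x). act t x) \<circ> (\<lambda>x. (t, x)))"
    by (intro continuous_on_compose continuous_on_Pair continuous_on_const continuous_on_id)
      (rule continuous_on_subset, auto)
  then show ?thesis by (simp add: o_def)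
qed

lemma flow_act_zero: "flow act \<Longrightarrow> act 0 x = x"
  unfolding flow_def by simp

lemma flow_act_add: "flow act \<Longrightarrow> act (s + t) x = act s (act t x)"
  unfolding flow_def by simp

lemma flow_act_inverse:
  assumes "flow act"
  shows "act (- t) (act t x) = x" and "act t (act (- t) x) = x"
  using flow_act_add[OF assms, symmetric] flow_act_zero[OF assms] by simp_all

lemma flow_interior_act_image:
  assumes "flow act" and "interior (act c ` S) \<noteq> {}"
  shows "interior S \<noteq> {}"
proof -
  define P where "P = act c -` interior (act c ` S)"
  have "open P"
    unfolding P_def by (rule open_vimage[OF open_interior flow_continuous_on_act[OF assms(1)]])
  moreover have "P \<subseteq> S"
  proof
    fix x assume "x \<in> P"
    then obtain s where "s \<in> S" "act c x = act c s" unfolding P_def using interior_subset by blast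
    then show "x \<in> S" using flow_act_inverse(1)[OF assms(1), of c] by metis
  qed
  moreover obtain y where "y \<in> interior (act c ` S)" using assms(2) by blast
  then have "act (- c) y \<in> P" unfolding P_def using flow_act_inverse(2)[OF assms(1)] by simp
  ultimately show ?thesis using interior_maximal by blast
qed

lemma flow_diag_act:
  assumes "flow act"
  shows "flow (diag_act act)"
  unfolding flow_def
proof (intro conjI allI)
  show "diag_act act 0 p = p" for p by (simp add: diag_act_def flow_act_zero[OF assms])
  show "diag_act act (s + t) p = diag_act act s (diag_act act t p)" for s t p
    by (simp add: diag_act_def flow_act_add[OF assms])
  have cont: "continuous_on UNIV (\<lambda>(t, x). act t x)" using assms unfolding flow_def by blast
  have "continuous_on UNIV (\<lambda>q. (\<lambda>(t, x). act t x) (fst q, fst (snd q)))"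
    "continuous_on UNIV (\<lambda>q. (\<lambda>(t, x). act t x) (fst q, snd (snd q)))"
    by (rule continuous_on_compose2[OF cont]; auto intro!: continuous_intros)+
  then have "continuous_on UNIV (\<lambda>q. (act (fst q) (fst (snd q)), act (fst q) (snd (snd q))))"
    by (auto intro: continuous_on_Pair)
  moreover have "(\<lambda>(t, p). diag_act act t p) = (\<lambda>q. (act (fst q) (fst (snd q)), act (fst q) (snd (snd q))))"
    by (auto simp: diag_act_def fun_eq_iff)
  ultimately show "continuous_on UNIV (\<lambda>(t, p). diag_act act t p)" by simp
qed

definition saturation :: "('g \<Rightarrow> 'z \<Rightarrow> 'z) \<Rightarrow> 'z set \<Rightarrow> 'z set" where
  "saturation act S = {z. \<exists>t. act t z \<in> S}"

lemma saturation_mono: "S \<subseteq> T \<Longrightarrow> saturation act S \<subseteq> saturation act T"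
  unfolding saturation_def by blast

lemma open_saturation:
  assumes "flow act" and "open S"
  shows "open (saturation act S)"
proof -
  have "saturation act S = (\<Union>t. act t -` S)" unfolding saturation_def by blast
  then show ?thesis
    using open_vimage[OF \<open>open S\<close> flow_continuous_on_act[OF \<open>flow act\<close>]] by auto
qed

lemma subset_closure_orbit:
  assumes "\<And>S. open S \<Longrightarrow> L \<inter> S \<noteq> {} \<Longrightarrow> z \<in> saturation act S"
  shows "L \<subseteq> closure (range (\<lambda>t. act t z))"
proof
  fix q assume "q \<in> L"
  show "q \<in> closure (range (\<lambda>t. act t z))"
  proof (rule ccontr)
    assume "q \<notin> closure (range (\<lambda>t. act t z))"
    then have "L \<inter> - closure (range (\<lambda>t. act t z)) \<noteq> {}" using \<open>q \<in> L\<close> by blast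
    then obtain t where "act t z \<in> - closure (range (\<lambda>t. act t z))"
      using assms[OF open_Compl[OF closed_closure]] unfolding saturation_def by blast
    moreover have "act t z \<in> closure (range (\<lambda>t. act t z))" by (rule subsetD[OF closure_subset rangeI])
    ultimately show False by simp
  qed
qed

lemma minimal_flow_closure_orbit:
  assumes "flow act" and "minimal_flow act"
  shows "closure (range (\<lambda>t. act t y)) = UNIV"
proof -
  let ?O = "closure (range (\<lambda>t. act t y))"
  have "act s ` ?O \<subseteq> ?O" for s
  proof (rule image_closure_subset)
    show "continuous_on ?O (act s)"
      by (rule continuous_on_subset[OF flow_continuous_on_act[OF assms(1)]]) simp
    show "act s ` range (\<lambda>t. act t y) \<subseteq> ?O"
    proof
      fix w assume "w \<in> act s ` range (\<lambda>t. act t y)"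
      then obtain t where "w = act s (act t y)" by blast
      then have "w = act (s + t) y" using flow_act_add[OF assms(1)] by simp
      then have "w \<in> range (\<lambda>t. act t y)" by (rule range_eqI)
      then show "w \<in> ?O" by (rule subsetD[OF closure_subset])
    qed
  qed simp
  moreover have "?O \<noteq> {}" using closure_subset by blast
  moreover have "closed ?O" by simp
  ultimately show ?thesis using assms(2) unfolding minimal_flow_def by (meson allI)
qed

lemma almost_periodic_finite_translates:
  fixes act :: "'g::topological_group_add \<Rightarrow> 'z::topological_space \<Rightarrow> 'z"
  assumes "flow act" and "almost_periodic_pt act z" and "open U" and "z \<in> U"
  obtains D where "finite D" and "\<forall>t. \<exists>c\<in>D. act t z \<in> act c ` U"
proof -
  have cont: "continuous_on UNIV (\<lambda>(t, x). act t x)" using assms(1) unfolding flow_def by blast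
  have "(0, z) \<in> (\<lambda>(t, x). act t x) -` U" using flow_act_zero[OF assms(1)] \<open>z \<in> U\<close> by simp
  then obtain V W where VW: "open V" "open W" "(0, z) \<in> V \<times> W" "V \<times> W \<subseteq> (\<lambda>(t, x). act t x) -` U"
    by (rule open_prod_elim[OF open_vimage[OF \<open>open U\<close> cont]])
  have "syndetic {t. act t z \<in> W}"
    using assms(2) VW(2,3) unfolding almost_periodic_pt_def by blast
  then obtain K :: "'g set" where K: "compact K" "\<forall>t. \<exists>k\<in>K. \<exists>s\<in>{t. act t z \<in> W}. t = k + s"
    unfolding syndetic_def by blast
  have "k \<in> (\<lambda>k'. - k + k') -` V" for k using VW(3) by simp
  then have cover: "K \<subseteq> (\<Union>c\<in>K. (\<lambda>k. - c + k) -` V)" by blast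
  have "open ((\<lambda>k. - c + k) -` V)" for c
    by (intro open_vimage[OF \<open>open V\<close>] continuous_intros)
  then obtain D :: "'g set" where D: "D \<subseteq> K" "finite D" "K \<subseteq> (\<Union>c\<in>D. (\<lambda>k. - c + k) -` V)"
    by (rule compactE_image[OF \<open>compact K\<close> _ cover])
  show thesis
  proof (rule that[OF \<open>finite D\<close>], intro allI)
    fix t
    obtain k s where ks: "k \<in> K" "act s z \<in> W" "t = k + s" using spec[OF K(2), of t] by blast
    then obtain c where c: "c \<in> D" "- c + k \<in> V" using D(3) by blast
    then have "(- c + k, act s z) \<in> V \<times> W" using ks(2) by simp
    with VW(4) have "(- c + k, act s z) \<in> (\<lambda>(t, x). act t x) -` U" by (rule subsetD)
    then have "act (- c + k) (act s z) \<in> U" by simp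
    moreover have "act t z = act c (act (- c + k) (act s z))"
    proof -
      have "t = c + ((- c + k) + s)" by (simp add: ks(3) add.assoc[symmetric])
      then show ?thesis by (simp only: flow_act_add[OF assms(1)])
    qed
    ultimately show "\<exists>c\<in>D. act t z \<in> act c ` U" using c(1) by blast
  qed
qed

lemma semi_open_factor:
  fixes actZ :: "'g::topological_group_add \<Rightarrow> 'z::metric_space \<Rightarrow> 'z"
    and actY :: "'g \<Rightarrow> 'y::t2_space \<Rightarrow> 'y"
  assumes "flow actZ" and "flow actY" and "minimal_flow actY"
    and "compact Z" and Z_inv: "\<And>t z. z \<in> Z \<Longrightarrow> actZ t z \<in> Z"
    and "continuous_on UNIV f" and f_equivariant: "\<And>t z. f (actZ t z) = actY t (f z)"
    and ap_dense: "Z \<subseteq> closure {z \<in> Z. almost_periodic_pt actZ z}"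
    and "open E" and "Z \<inter> E \<noteq> {}"
  shows "interior (f ` (Z \<inter> E)) \<noteq> {}"
proof -
  have "E \<inter> {z \<in> Z. almost_periodic_pt actZ z} \<noteq> {}"
    using ap_dense \<open>Z \<inter> E \<noteq> {}\<close> open_Int_closure_eq_empty[OF \<open>open E\<close>] by blast
  then obtain z where z: "z \<in> E" "z \<in> Z" "almost_periodic_pt actZ z" by blast
  obtain r where "r > 0" "cball z r \<subseteq> E" using \<open>open E\<close> z(1) open_contains_cball by blast
  define C where "C = Z \<inter> cball z r"
  have "compact C" unfolding C_def using \<open>compact Z\<close> by (intro compact_Int_closed) auto
  have "z \<in> ball z r" using \<open>r > 0\<close> by simp
  then obtain D :: "'g set" where "finite D" and D: "\<forall>t. \<exists>c\<in>D. actZ t z \<in> actZ c ` ball z r"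
    by (rule almost_periodic_finite_translates[OF \<open>flow actZ\<close> z(3) open_ball])
  have orbit: "actY t (f z) \<in> (\<Union>c\<in>D. actY c ` f ` C)" for t
  proof -
    obtain c u where c: "c \<in> D" "u \<in> ball z r" "actZ t z = actZ c u" using spec[OF D, of t] by blast
    then have "u = actZ (- c) (actZ t z)" using flow_act_inverse(1)[OF \<open>flow actZ\<close>] by simp
    then have "u \<in> C" using Z_inv z(2) c(2) unfolding C_def by auto
    moreover have "actY t (f z) = actY c (f u)" using f_equivariant c(3) by metis
    ultimately show ?thesis using c(1) by blast
  qed
  have closed_translate: "closed (actY c ` f ` C)" for c
  proof -
    have "compact (f ` C)"
      by (rule compact_continuous_image[OF continuous_on_subset[OF \<open>continuous_on UNIV f\<close>] \<open>compact C\<close>]) simp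
    then have "compact (actY c ` f ` C)"
      by (rule compact_continuous_image[OF continuous_on_subset[OF flow_continuous_on_act[OF \<open>flow actY\<close>]], rotated]) simp
    then show ?thesis by (rule compact_imp_closed)
  qed
  \<comment> \<open>the orbit closure of \<open>f z\<close>, which is all of the minimal flow, is covered by finitely many
     closed translates of \<open>f ` C\<close>; one of them has interior\<close>
  have "closure (range (\<lambda>t. actY t (f z))) \<subseteq> (\<Union>c\<in>D. actY c ` f ` C)"
    using orbit \<open>finite D\<close> closed_translate by (intro closure_minimal) auto
  then have cover: "(\<Union>c\<in>D. actY c ` f ` C) = UNIV"
    using minimal_flow_closure_orbit[OF \<open>flow actY\<close> \<open>minimal_flow actY\<close>] by auto
  have "\<exists>c\<in>D. interior (actY c ` f ` C) \<noteq> {}"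
  proof (rule ccontr)
    assume "\<not> (\<exists>c\<in>D. interior (actY c ` f ` C) \<noteq> {})"
    then have "interior (\<Union>c\<in>D. actY c ` f ` C) = {}"
      using \<open>finite D\<close> closed_translate by (intro interior_Union_closed_eq_empty) auto
    then show False using cover by simp
  qed
  then obtain c where "interior (actY c ` f ` C) \<noteq> {}" by blast
  then have "interior (f ` C) \<noteq> {}" by (rule flow_interior_act_image[OF \<open>flow actY\<close>])
  moreover have "f ` C \<subseteq> f ` (Z \<inter> E)" unfolding C_def using \<open>cball z r \<subseteq> E\<close> by auto
  ultimately show ?thesis using interior_mono by blast
qed

section \<open>Residual fibres of a weakly mixing extension\<close>

lemma closed_Rpi:
  fixes \<pi> :: "'x::topological_space \<Rightarrow> 'y::t2_space"
  assumes "continuous_on UNIV \<pi>"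
  shows "closed (Rpi \<pi>)"
proof -
  have "continuous_on UNIV (\<lambda>p. \<pi> (fst p))" "continuous_on UNIV (\<lambda>p. \<pi> (snd p))"
    by (rule continuous_on_compose2[OF assms]; auto intro!: continuous_intros)+
  moreover have "Rpi \<pi> = {p. \<pi> (fst p) = \<pi> (snd p)}" unfolding Rpi_def by auto
  ultimately show ?thesis using closed_Collect_eq by metis
qed

lemma diag_act_Rpi:
  assumes "extension actX actY \<pi>" and "p \<in> Rpi \<pi>"
  shows "diag_act actX t p \<in> Rpi \<pi>"
  using assms unfolding extension_def Rpi_def diag_act_def by auto

lemma Rpi_semi_open:
  fixes actX :: "'g::topological_group_add \<Rightarrow> 'x::metric_space \<Rightarrow> 'x"
    and actY :: "'g \<Rightarrow> 'y::t2_space \<Rightarrow> 'y"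
  assumes "compact (UNIV :: 'x set)" and "flow actX" and "flow actY" and "minimal_flow actY"
    and ext: "extension actX actY \<pi>"
    and "Rpi \<pi> \<subseteq> closure {z \<in> Rpi \<pi>. almost_periodic_pt (diag_act actX) z}"
    and "open E" and "Rpi \<pi> \<inter> E \<noteq> {}"
  shows "interior ((\<pi> \<circ> fst) ` (Rpi \<pi> \<inter> E)) \<noteq> {}"
proof (rule semi_open_factor[OF flow_diag_act[OF \<open>flow actX\<close>] \<open>flow actY\<close> \<open>minimal_flow actY\<close>])
  have "continuous_on UNIV \<pi>" using ext unfolding extension_def by blast
  have "compact (UNIV :: ('x \<times> 'x) set)" using compact_Times[OF assms(1) assms(1)] by simp
  then show "compact (Rpi \<pi>)"
    using compact_Int_closed[OF _ closed_Rpi[OF \<open>continuous_on UNIV \<pi>\<close>]] by (metis inf_top_left)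
  show "continuous_on UNIV (\<pi> \<circ> fst)"
    by (rule continuous_on_compose[OF continuous_on_fst[OF continuous_on_id]])
      (rule continuous_on_subset[OF \<open>continuous_on UNIV \<pi>\<close>], simp)
  show "(\<pi> \<circ> fst) (diag_act actX t p) = actY t ((\<pi> \<circ> fst) p)" for t p
    using ext unfolding extension_def diag_act_def by simp
  show "diag_act actX t p \<in> Rpi \<pi>" if "p \<in> Rpi \<pi>" for t p by (rule diag_act_Rpi[OF ext that])
qed (fact assms)+

lemma weakly_mixing_saturation:
  assumes "weakly_mixing_ext act \<pi>" and "open E" and "open S"
    and "Rpi \<pi> \<inter> E \<noteq> {}" and "Rpi \<pi> \<inter> S \<noteq> {}"
  shows "Rpi \<pi> \<inter> E \<inter> saturation (diag_act act) S \<noteq> {}"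
proof -
  have "openin (top_of_set (Rpi \<pi>)) (Rpi \<pi> \<inter> E)" "openin (top_of_set (Rpi \<pi>)) (Rpi \<pi> \<inter> S)"
    using \<open>open E\<close> \<open>open S\<close> by (simp_all add: openin_open_Int)
  then obtain t where "(Rpi \<pi> \<inter> S) \<inter> diag_act act t ` (Rpi \<pi> \<inter> E) \<noteq> {}"
    using assms(1,4,5) unfolding weakly_mixing_ext_def by presburger
  then obtain p where "p \<in> Rpi \<pi> \<inter> E" "diag_act act t p \<in> S" by blast
  then show ?thesis unfolding saturation_def by blast
qed

lemma fibre_square_subset_closure:
  assumes base: "\<And>x U. open U \<Longrightarrow> x \<in> U \<Longrightarrow> \<exists>n. x \<in> R n \<and> R n \<subseteq> U"
    and good: "\<And>i j. y \<in> interior ((\<pi> \<circ> fst) ` (Rpi \<pi> \<inter> (R i \<times> R j) \<inter> W))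
      \<union> - closure ((\<pi> \<circ> fst) ` (Rpi \<pi> \<inter> (R i \<times> R j)))"
  shows "\<pi> -` {y} \<times> \<pi> -` {y} \<subseteq> closure (W \<inter> \<pi> -` {y} \<times> \<pi> -` {y})"
proof
  fix q assume q: "q \<in> \<pi> -` {y} \<times> \<pi> -` {y}"
  show "q \<in> closure (W \<inter> \<pi> -` {y} \<times> \<pi> -` {y})"
    unfolding closure_iff_nhds_not_empty
  proof (intro allI impI)
    fix A U assume "U \<subseteq> A" "open U" "q \<in> U"
    obtain i j where ij: "q \<in> R i \<times> R j" "R i \<times> R j \<subseteq> U"
      by (rule product_neighbourhood_base[OF base \<open>open U\<close> \<open>q \<in> U\<close>])
    have "q \<in> Rpi \<pi> \<inter> (R i \<times> R j)" "(\<pi> \<circ> fst) q = y" using q ij(1) unfolding Rpi_def by auto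
    then have "y \<in> closure ((\<pi> \<circ> fst) ` (Rpi \<pi> \<inter> (R i \<times> R j)))"
      using subsetD[OF closure_subset imageI[of q _ "\<pi> \<circ> fst"]] by simp
    then have "y \<in> interior ((\<pi> \<circ> fst) ` (Rpi \<pi> \<inter> (R i \<times> R j) \<inter> W))" using good[of i j] by simp
    then have "y \<in> (\<pi> \<circ> fst) ` (Rpi \<pi> \<inter> (R i \<times> R j) \<inter> W)"
      using interior_subset by (rule subsetD[rotated])
    then obtain p where "p \<in> Rpi \<pi>" "p \<in> R i \<times> R j" "p \<in> W" "(\<pi> \<circ> fst) p = y" by blast
    then have "p \<in> W \<inter> \<pi> -` {y} \<times> \<pi> -` {y}" "p \<in> A"
      using ij(2) \<open>U \<subseteq> A\<close> unfolding Rpi_def by auto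
    then show "(W \<inter> \<pi> -` {y} \<times> \<pi> -` {y}) \<inter> A \<noteq> {}" by blast
  qed
qed

lemma residual_fibre_transitivity:
  fixes \<pi> :: "'x::metric_space \<Rightarrow> 'y::topological_space"
    and act :: "'g::topological_group_add \<Rightarrow> 'x \<Rightarrow> 'x"
  assumes "compact (UNIV :: 'x set)" and "continuous_on UNIV \<pi>" and "flow act"
    and semi_open: "\<And>E. open E \<Longrightarrow> Rpi \<pi> \<inter> E \<noteq> {} \<Longrightarrow> interior ((\<pi> \<circ> fst) ` (Rpi \<pi> \<inter> E)) \<noteq> {}"
    and "weakly_mixing_ext act \<pi>" and "countable \<O>" and open_\<O>: "\<And>S. S \<in> \<O> \<Longrightarrow> open S"
  shows "\<exists>Y0. residual Y0 \<and> (\<forall>y\<in>Y0. \<forall>S\<in>\<O>. Rpi \<pi> \<inter> S \<noteq> {} \<longrightarrow>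
    \<pi> -` {y} \<times> \<pi> -` {y} \<subseteq> closure (saturation (diag_act act) S \<inter> \<pi> -` {y} \<times> \<pi> -` {y}))"
proof -
  obtain R :: "nat \<Rightarrow> 'x set" where R: "\<And>n. open (R n)"
    "\<And>x U. x \<in> UNIV \<Longrightarrow> open U \<Longrightarrow> x \<in> U \<Longrightarrow> \<exists>n. x \<in> R n \<and> R n \<subseteq> U"
    by (rule compact_local_base_sequence[OF assms(1) UNIV_not_empty]) (rule that)
  define g :: "'x \<times> 'x \<Rightarrow> 'y" where "g = \<pi> \<circ> fst"
  have "continuous_on UNIV g"
    unfolding g_def by (rule continuous_on_compose[OF continuous_on_fst[OF continuous_on_id]])
      (rule continuous_on_subset[OF \<open>continuous_on UNIV \<pi>\<close>], simp)
  \<comment> \<open>\<open>y \<in> D i j S\<close>: if the fibre square over \<open>y\<close> meets \<open>R i \<times> R j\<close>, then it contains a pair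
     in \<open>R i \<times> R j\<close> whose orbit enters \<open>S\<close>\<close>
  define D where "D i j S = interior (g ` (Rpi \<pi> \<inter> (R i \<times> R j) \<inter> saturation (diag_act act) S))
      \<union> - closure (g ` (Rpi \<pi> \<inter> (R i \<times> R j)))" for i j S
  define \<D> where "\<D> = (\<lambda>(i, j, S). D i j S) ` (UNIV \<times> UNIV \<times> {S \<in> \<O>. Rpi \<pi> \<inter> S \<noteq> {}})"
  have "open (D i j S) \<and> closure (D i j S) = UNIV" if "S \<in> \<O>" "Rpi \<pi> \<inter> S \<noteq> {}" for i j S
  proof
    show "open (D i j S)" unfolding D_def by blast
    show "closure (D i j S) = UNIV"
      unfolding D_def
    proof (rule dense_interior_image_Un_compl_closure[OF \<open>continuous_on UNIV g\<close> open_Times[OF R(1) R(1)]])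
      fix E assume "open E" "Rpi \<pi> \<inter> E \<noteq> {}"
      then have "Rpi \<pi> \<inter> E \<inter> saturation (diag_act act) S \<noteq> {}"
        using weakly_mixing_saturation[OF assms(5) _ open_\<O>] that by blast
      then show "interior (g ` (Rpi \<pi> \<inter> E \<inter> saturation (diag_act act) S)) \<noteq> {}"
        using semi_open[OF open_Int[OF \<open>open E\<close> open_saturation[OF flow_diag_act[OF \<open>flow act\<close>] open_\<O>[OF that(1)]]]]
        unfolding g_def by (simp add: Int_assoc)
    qed
  qed
  then have "\<forall>U\<in>\<D>. open U \<and> closure U = UNIV" unfolding \<D>_def by auto
  moreover have "countable \<D>"
    unfolding \<D>_def by (intro countable_image countable_SIGMA countableI_type countable_Collect \<open>countable \<O>\<close>)
  ultimately have "residual (\<Inter>\<D>)" unfolding residual_def by blast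
  moreover have "\<pi> -` {y} \<times> \<pi> -` {y} \<subseteq> closure (saturation (diag_act act) S \<inter> \<pi> -` {y} \<times> \<pi> -` {y})"
    if "y \<in> \<Inter>\<D>" "S \<in> \<O>" "Rpi \<pi> \<inter> S \<noteq> {}" for y S
  proof (rule fibre_square_subset_closure[OF R(2)[OF UNIV_I]])
    fix i j
    have "D i j S \<in> \<D>" unfolding \<D>_def using that(2,3) by (auto intro!: image_eqI[of _ _ "(i, j, S)"])
    then show "y \<in> interior ((\<pi> \<circ> fst) ` (Rpi \<pi> \<inter> (R i \<times> R j) \<inter> saturation (diag_act act) S))
        \<union> - closure ((\<pi> \<circ> fst) ` (Rpi \<pi> \<inter> (R i \<times> R j)))"
      using that(1) unfolding D_def g_def by blast
  qed
  ultimately show ?thesis by blast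
qed

lemma saturation_rectangle_offdiagonal:
  fixes R :: "nat \<Rightarrow> 'x::t2_space set" and \<pi> :: "'x \<Rightarrow> 'y"
  assumes base: "\<And>x U. open U \<Longrightarrow> x \<in> U \<Longrightarrow> \<exists>n. x \<in> R n \<and> R n \<subseteq> U" and "Rpi \<pi> \<noteq> Id"
  obtains i j where "Rpi \<pi> \<inter> (R i \<times> R j) \<noteq> {}" and "saturation (diag_act act) (R i \<times> R j) \<inter> Id = {}"
proof -
  have "Id \<subseteq> Rpi \<pi>" unfolding Rpi_def by auto
  then obtain a b where ab: "(a, b) \<in> Rpi \<pi>" "a \<noteq> b" using \<open>Rpi \<pi> \<noteq> Id\<close> by auto
  obtain U V where UV: "open U" "open V" "a \<in> U" "b \<in> V" "U \<inter> V = {}"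
    using hausdorff[OF \<open>a \<noteq> b\<close>] by blast
  obtain i where i: "a \<in> R i" "R i \<subseteq> U" using base[OF UV(1,3)] by blast
  obtain j where j: "b \<in> R j" "R j \<subseteq> V" using base[OF UV(2,4)] by blast
  have "(a, b) \<in> Rpi \<pi> \<inter> (R i \<times> R j)" using ab(1) i(1) j(1) by simp
  moreover have "(u, u) \<notin> saturation (diag_act act) (R i \<times> R j)" for u
    using i(2) j(2) UV(5) unfolding saturation_def diag_act_def by auto
  ultimately show thesis using that[of i j] by auto
qed

lemma LY_scrambled_if_in_saturations:
  assumes base: "\<And>x U. open U \<Longrightarrow> x \<in> U \<Longrightarrow> \<exists>n. x \<in> R n \<and> R n \<subseteq> U"
    and "B \<subseteq> \<pi> -` {y}"
    and in_saturations: "\<And>x x' i j. x \<in> B \<Longrightarrow> x' \<in> B \<Longrightarrow> x \<noteq> x' \<Longrightarrow> Rpi \<pi> \<inter> (R i \<times> R j) \<noteq> {}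
      \<Longrightarrow> (x, x') \<in> saturation (diag_act act) (R i \<times> R j)"
  shows "LY_scrambled act \<pi> (Rpi \<pi>) B"
  unfolding LY_scrambled_def LY_pair_def
proof (intro ballI impI conjI)
  fix x x' assume xx': "x \<in> B" "x' \<in> B" "x \<noteq> x'"
  then show "(x, x') \<in> Rpi \<pi>" using \<open>B \<subseteq> \<pi> -` {y}\<close> unfolding Rpi_def by auto
  show "Rpi \<pi> \<subseteq> closure (range (\<lambda>t. diag_act act t (x, x')))"
  proof (rule subset_closure_orbit)
    fix S assume "open S" "Rpi \<pi> \<inter> S \<noteq> {}"
    then obtain q where q: "q \<in> Rpi \<pi>" "q \<in> S" by blast
    obtain i j where ij: "q \<in> R i \<times> R j" "R i \<times> R j \<subseteq> S"
      by (rule product_neighbourhood_base[OF base \<open>open S\<close> \<open>q \<in> S\<close>])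
    then have "(x, x') \<in> saturation (diag_act act) (R i \<times> R j)"
      using in_saturations[OF xx'] q(1) by blast
    then show "(x, x') \<in> saturation (diag_act act) S" using saturation_mono[OF ij(2)] by blast
  qed
qed

lemma scrambled_subset_of_transitive_fibre:
  fixes \<pi> :: "'x::metric_space \<Rightarrow> 'y::t2_space" and R :: "nat \<Rightarrow> 'x set"
  assumes "compact (UNIV :: 'x set)" and "continuous_on UNIV \<pi>" and "y \<in> range \<pi>" and "flow act"
    and R_open: "\<And>n. open (R n)" and base: "\<And>x U. open U \<Longrightarrow> x \<in> U \<Longrightarrow> \<exists>n. x \<in> R n \<and> R n \<subseteq> U"
    and "Rpi \<pi> \<noteq> Id"
    and transitive: "\<And>i j. Rpi \<pi> \<inter> (R i \<times> R j) \<noteq> {} \<Longrightarrow>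
      \<pi> -` {y} \<times> \<pi> -` {y} \<subseteq> closure (saturation (diag_act act) (R i \<times> R j) \<inter> \<pi> -` {y} \<times> \<pi> -` {y})"
  shows "(\<forall>x\<in>\<pi> -` {y}. x islimpt \<pi> -` {y}) \<and>
    (\<exists>B. B \<subseteq> \<pi> -` {y} \<and> uncountable B \<and> \<pi> -` {y} \<subseteq> closure B \<and> LY_scrambled act \<pi> (Rpi \<pi>) B)"
proof -
  define F where "F = \<pi> -` {y}"
  define \<W> where "\<W> = (\<lambda>(i, j). saturation (diag_act act) (R i \<times> R j)) ` {(i, j). Rpi \<pi> \<inter> (R i \<times> R j) \<noteq> {}}"
  have "closed F" unfolding F_def using closed_vimage[OF closed_singleton \<open>continuous_on UNIV \<pi>\<close>] by blast
  then have "compact F" using compact_Int_closed[OF assms(1)] by (metis inf_top_left)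
  have "F \<noteq> {}" unfolding F_def using \<open>y \<in> range \<pi>\<close> by blast
  have "countable \<W>" unfolding \<W>_def by (intro countable_image countableI_type)
  have open_\<W>: "open W" if "W \<in> \<W>" for W
    using that open_saturation[OF flow_diag_act[OF \<open>flow act\<close>] open_Times[OF R_open R_open]]
    unfolding \<W>_def by auto
  have dense_\<W>: "F \<times> F \<subseteq> closure (W \<inter> F \<times> F)" if W: "W \<in> \<W>" for W
  proof -
    obtain i j where "W = saturation (diag_act act) (R i \<times> R j)" "Rpi \<pi> \<inter> (R i \<times> R j) \<noteq> {}"
      using W unfolding \<W>_def by auto
    then show ?thesis using transitive unfolding F_def by simp
  qed
  obtain i0 j0 where "Rpi \<pi> \<inter> (R i0 \<times> R j0) \<noteq> {}"
    and offdiagonal: "saturation (diag_act act) (R i0 \<times> R j0) \<inter> Id = {}"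
    by (rule saturation_rectangle_offdiagonal[OF base \<open>Rpi \<pi> \<noteq> Id\<close>])
  then have offdiagonal_in: "saturation (diag_act act) (R i0 \<times> R j0) \<in> \<W>" unfolding \<W>_def by auto
  obtain B where B: "B \<subseteq> F" "uncountable B" "F \<subseteq> closure B"
    "\<forall>x\<in>B. \<forall>x'\<in>B. x \<noteq> x' \<longrightarrow> (x, x') \<in> \<Inter>\<W>"
    by (rule Mycielski[OF \<open>compact F\<close> \<open>F \<noteq> {}\<close> \<open>countable \<W>\<close> open_\<W> dense_\<W> offdiagonal_in offdiagonal])
  have "\<forall>x\<in>F. x islimpt F"
    using islimpt_if_dense_offdiagonal[OF dense_\<W>[OF offdiagonal_in] offdiagonal] by blast
  moreover have "LY_scrambled act \<pi> (Rpi \<pi>) B"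
  proof (rule LY_scrambled_if_in_saturations[OF base B(1)[unfolded F_def]])
    fix x x' i j assume "x \<in> B" "x' \<in> B" "x \<noteq> x'" "Rpi \<pi> \<inter> (R i \<times> R j) \<noteq> {}"
    moreover have "saturation (diag_act act) (R i \<times> R j) \<in> \<W>"
      using \<open>Rpi \<pi> \<inter> (R i \<times> R j) \<noteq> {}\<close> unfolding \<W>_def by auto
    ultimately show "(x, x') \<in> saturation (diag_act act) (R i \<times> R j)" using B(4) by blast
  qed
  ultimately show ?thesis using B(1-3) unfolding F_def by blast
qed

theorem theorem5p5:
  fixes actX :: "'g::topological_group_add \<Rightarrow> 'x::metric_space \<Rightarrow> 'x"
    and actY :: "'g \<Rightarrow> 'y::metric_space \<Rightarrow> 'y"
    and \<pi> :: "'x \<Rightarrow> 'y"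
  assumes "compact (UNIV :: 'x set)" and "compact (UNIV :: 'y set)"
    and "flow actX" and "flow actY"
    and "extension actX actY \<pi>"
    and "Rpi \<pi> \<noteq> Id"
    and "minimal_flow actY"
    and "Rpi \<pi> \<subseteq> closure {z \<in> Rpi \<pi>. almost_periodic_pt (diag_act actX) z}"
    and "weakly_mixing_ext actX \<pi>"
  shows "\<exists>YLY. residual YLY \<and>
    (\<forall>y\<in>YLY. (\<forall>x\<in>\<pi> -` {y}. x islimpt (\<pi> -` {y})) \<and>
       (\<exists>B. B \<subseteq> \<pi> -` {y} \<and> uncountable B \<and> \<pi> -` {y} \<subseteq> closure B \<and>
            LY_scrambled actX \<pi> (Rpi \<pi>) B))"
proof -
  have "continuous_on UNIV \<pi>" "surj \<pi>" using assms(5) unfolding extension_def by blast+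
  obtain R :: "nat \<Rightarrow> 'x set" where R: "\<And>n. open (R n)" "\<And>n. R n \<inter> UNIV \<noteq> {}"
    "\<And>x U. x \<in> UNIV \<Longrightarrow> open U \<Longrightarrow> x \<in> U \<Longrightarrow> \<exists>n. x \<in> R n \<and> R n \<subseteq> U"
    by (rule compact_local_base_sequence[OF assms(1) UNIV_not_empty]) (rule that)
  let ?\<O> = "range (\<lambda>(i, j). R i \<times> R j)"
  have "countable ?\<O>" by (intro countable_image countableI_type)
  moreover have "open S" if "S \<in> ?\<O>" for S using that R(1) by (auto intro: open_Times)
  ultimately obtain YLY where "residual YLY" and transitive: "\<forall>y\<in>YLY. \<forall>S\<in>?\<O>.
      Rpi \<pi> \<inter> S \<noteq> {} \<longrightarrow> \<pi> -` {y} \<times> \<pi> -` {y} \<subseteq> closure (saturation (diag_act actX) S \<inter> \<pi> -` {y} \<times> \<pi> -` {y})"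
    using residual_fibre_transitivity[OF assms(1) \<open>continuous_on UNIV \<pi>\<close> assms(3)
        Rpi_semi_open[OF assms(1,3,4,7,5,8)] assms(9)] by blast
  have "(\<forall>x\<in>\<pi> -` {y}. x islimpt \<pi> -` {y}) \<and>
      (\<exists>B. B \<subseteq> \<pi> -` {y} \<and> uncountable B \<and> \<pi> -` {y} \<subseteq> closure B \<and> LY_scrambled actX \<pi> (Rpi \<pi>) B)"
    if "y \<in> YLY" for y
    using transitive that \<open>surj \<pi>\<close>
    by (intro scrambled_subset_of_transitive_fibre[OF assms(1) \<open>continuous_on UNIV \<pi>\<close> _ assms(3) R(1)
          R(3)[OF UNIV_I] assms(6)]) auto
  then show ?thesis using \<open>residual YLY\<close> by blast
qed

end
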